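(* For all integers $m\geq 3$ and $n\geq 1$, the prism graph $C[m]\times P[n+1]$ is antimagic.
   Context: All graphs are finite, undirected and simple. $C[m]$ denotes the cycle on $m$ vertices and $P[k]$ the path on $k$ vertices. The Cartesian product $G_1\times G_2$ of graphs $G_1=(V_1,E_1)$ and $G_2=(V_2,E_2)$ has vertex set $V_1\times V_2$, with $(u_1,u_2)$ adjacent to $(v_1,v_2)$ iff either $u_1=v_1$ and $u_2v_2\in E_2$, or $u_2=v_2$ and $u_1v_1\in E_1$. An antimagic labeling of a graph with $m'$ edges is a bijection $f$ from its edge set to $\{1,\ldots,m'\}$ such that the vertex sums $f^+(v)=\sum_{e\ni v} f(e)$ (sum over edges incident with $v$) are pairwise distinct over all vertices $v$. A graph is antimagic if it admits an antimagic labeling. *)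

theory Defs
  imports Main
begin

definition cycle_edges :: "nat \<Rightarrow> nat set set" where
  "cycle_edges m = {{i, (i + 1) mod m} | i. i < m}"

definition cycle_graph :: "nat \<Rightarrow> nat set \<times> nat set set" where
  "cycle_graph m = ({0..<m}, cycle_edges m)"

definition path_edges :: "nat \<Rightarrow> nat set set" where
  "path_edges k = {{j, j + 1} | j. j + 1 < k}"

definition path_graph :: "nat \<Rightarrow> nat set \<times> nat set set" where
  "path_graph k = ({0..<k}, path_edges k)"

definition cart_prod ::
  "'a set \<times> 'a set set \<Rightarrow> 'b set \<times> 'b set set \<Rightarrow> ('a \<times> 'b) set \<times> ('a \<times> 'b) set set" where
  "cart_prod G1 G2 =
     (fst G1 \<times> fst G2,
      {{(u1, u2), (v1, v2)} | u1 u2 v1 v2.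
         u1 \<in> fst G1 \<and> v1 \<in> fst G1 \<and> u2 \<in> fst G2 \<and> v2 \<in> fst G2 \<and>
         ((u1 = v1 \<and> {u2, v2} \<in> snd G2) \<or> (u2 = v2 \<and> {u1, v1} \<in> snd G1))})"

definition vertex_sum :: "'a set set \<Rightarrow> ('a set \<Rightarrow> nat) \<Rightarrow> 'a \<Rightarrow> nat" where
  "vertex_sum E f v = (\<Sum>e\<in>{e\<in>E. v \<in> e}. f e)"

definition antimagic_labeling :: "'a set \<times> 'a set set \<Rightarrow> ('a set \<Rightarrow> nat) \<Rightarrow> bool" where
  "antimagic_labeling G f \<longleftrightarrow>
     bij_betw f (snd G) {1..card (snd G)} \<and>
     inj_on (vertex_sum (snd G) f) (fst G)"

definition antimagic :: "'a set \<times> 'a set set \<Rightarrow> bool" where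
  "antimagic G \<longleftrightarrow> (\<exists>f. antimagic_labeling G f)"

end

theory Submission
  imports Defs
begin

(* The labels 1..m(2n+1) form 2n+1 blocks of m
   consecutive numbers: the rims of layers 0, ..., n-1 get blocks 0, ..., n-1, the spokes between
   layers j and j+1 get block n+j, and the top rim gets the last block 2n. Inside its block, an
   edge at cycle position i gets a zigzag offset depending on i only. The vertex sum at (i, j) is
   then m B_j plus a remainder between d_j and m d_j, where d_j is the degree of the layer and
   B_j the sum of its blocks; since B_j + d_j <= B_j' for j < j', sums in different layers differ.
   Inside a layer the remainder is a strictly increasing function of the rank of i in a fixed
   order of the cycle positions, so sums in the same layer differ as well. *)

lemma cart_prod_edgeI:
  assumes "u1 \<in> fst G1" "v1 \<in> fst G1" "u2 \<in> fst G2" "v2 \<in> fst G2"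
    and "(u1 = v1 \<and> {u2, v2} \<in> snd G2) \<or> (u2 = v2 \<and> {u1, v1} \<in> snd G1)"
  shows "{(u1, u2), (v1, v2)} \<in> snd (cart_prod G1 G2)"
  using assms unfolding cart_prod_def snd_conv by blast

lemma bij_betw_radix_label:
  fixes q r :: "'a \<Rightarrow> nat"
  assumes "finite A" "card A = m * b" "\<And>x. x \<in> A \<Longrightarrow> q x < b \<and> r x < m"
    and "inj_on (\<lambda>x. (q x, r x)) A"
  shows "bij_betw (\<lambda>x. m * q x + r x + 1) A {1..m * b}"
proof -
  have inj: "inj_on (\<lambda>x. m * q x + r x + 1) A"
  proof (rule inj_onI)
    fix x y assume xy: "x \<in> A" "y \<in> A" and eq: "m * q x + r x + 1 = m * q y + r y + 1"
    then have "(m * q x + r x) div m = (m * q y + r y) div m"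
      and "(m * q x + r x) mod m = (m * q y + r y) mod m" by simp_all
    then have "q x = q y" "r x = r y" using assms(3)[OF xy(1)] assms(3)[OF xy(2)] by simp_all
    then show "x = y" using assms(4) xy by (auto dest: inj_onD)
  qed
  have "m * q x + r x + 1 \<le> m * b" if "x \<in> A" for x
  proof -
    have "m * q x + r x + 1 \<le> m * Suc (q x)" using assms(3)[OF that] by simp
    also have "\<dots> \<le> m * b" using assms(3)[OF that] by (intro mult_le_mono2) simp
    finally show ?thesis .
  qed
  then have "(\<lambda>x. m * q x + r x + 1) ` A \<subseteq> {1..m * b}" by auto
  moreover have "card ((\<lambda>x. m * q x + r x + 1) ` A) = card {1..m * b}"
    using card_image[OF inj] assms(2) by simp
  ultimately have "(\<lambda>x. m * q x + r x + 1) ` A = {1..m * b}"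
    by (rule card_subset_eq[OF finite_atLeastAtMost])
  then show ?thesis
    using inj by (rule bij_betw_imageI[rotated])
qed

lemma antimagic_labeling_reindex:
  assumes phi: "bij_betw \<phi> D (snd G)" and h: "bij_betw h D {1..card D}"
    and sums: "inj_on (\<lambda>v. \<Sum>d\<in>{d \<in> D. v \<in> \<phi> d}. h d) (fst G)"
  shows "antimagic_labeling G (h \<circ> inv_into D \<phi>)"
proof -
  have "vertex_sum (snd G) (h \<circ> inv_into D \<phi>) = (\<lambda>v. \<Sum>d\<in>{d \<in> D. v \<in> \<phi> d}. h d)"
  proof (rule ext)
    fix v
    have "{e \<in> snd G. v \<in> e} = \<phi> ` {d \<in> D. v \<in> \<phi> d}"
      using phi by (auto simp: bij_betw_def)
    moreover have "inj_on \<phi> {d \<in> D. v \<in> \<phi> d}"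
      using phi by (auto simp: bij_betw_def intro: inj_on_subset)
    ultimately show "vertex_sum (snd G) (h \<circ> inv_into D \<phi>) v = (\<Sum>d\<in>{d \<in> D. v \<in> \<phi> d}. h d)"
      using phi unfolding vertex_sum_def
      by (simp add: sum.reindex bij_betw_def)
  qed
  moreover have "bij_betw (h \<circ> inv_into D \<phi>) (snd G) {1..card (snd G)}"
    using bij_betw_trans[OF bij_betw_inv_into[OF phi] h] bij_betw_same_card[OF phi] by simp
  ultimately show ?thesis
    using sums unfolding antimagic_labeling_def by simp
qed

definition cycle_pred :: "nat \<Rightarrow> nat \<Rightarrow> nat" where
  "cycle_pred m i = (if i = 0 then m - 1 else i - 1)"

lemma cycle_pred_less: "i < m \<Longrightarrow> cycle_pred m i < m"
  unfolding cycle_pred_def by auto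

lemma cycle_pred_neq_self: "2 \<le> m \<Longrightarrow> cycle_pred m i \<noteq> i"
  unfolding cycle_pred_def by auto

lemma Suc_mod_eq_iff_cycle_pred:
  assumes "i < m" "i' < m"
  shows "i = Suc i' mod m \<longleftrightarrow> i' = cycle_pred m i"
  using assms unfolding cycle_pred_def by (cases "Suc i' = m") (auto simp: mod_Suc)

lemma cycle_edge_inject:
  assumes "3 \<le> m" "i < m" "i' < m" and eq: "{i, Suc i mod m} = {i', Suc i' mod m}"
  shows "i = i'"
proof (rule ccontr)
  assume "i \<noteq> i'"
  with eq have "i = Suc i' mod m" "i' = Suc i mod m" by (auto simp: doubleton_eq_iff)
  then have "(i + 2) mod m = i mod m" using \<open>i < m\<close> by (simp add: mod_Suc_eq)
  then have "m dvd 2" by (simp add: mod_eq_dvd_iff_nat)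
  with assms(1) show False by (auto dest: dvd_imp_le)
qed

datatype prism_edge = Rim nat nat | Spoke nat nat

fun endpoints :: "nat \<Rightarrow> prism_edge \<Rightarrow> (nat \<times> nat) set" where
  "endpoints m (Rim i j) = {(i, j), (Suc i mod m, j)}"
| "endpoints m (Spoke i j) = {(i, j), (i, Suc j)}"

definition prism_edges :: "nat \<Rightarrow> nat \<Rightarrow> prism_edge set" where
  "prism_edges m n = {Rim i j | i j. i < m \<and> j \<le> n} \<union> {Spoke i j | i j. i < m \<and> j < n}"

lemma finite_prism_edges: "finite (prism_edges m n)"
  and card_prism_edges: "card (prism_edges m n) = m * (2 * n + 1)"
proof -
  have eq: "prism_edges m n =
      case_prod Rim ` ({..<m} \<times> {..n}) \<union> case_prod Spoke ` ({..<m} \<times> {..<n})"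
    unfolding prism_edges_def by auto
  show "finite (prism_edges m n)" unfolding eq by simp
  have "card (prism_edges m n) = card ({..<m} \<times> {..n}) + card ({..<m} \<times> {..<n})"
    unfolding eq by (subst card_Un_disjoint) (auto simp: card_image inj_on_def)
  then show "card (prism_edges m n) = m * (2 * n + 1)"
    by (simp add: card_cartesian_product algebra_simps)
qed

lemma prism_vertices: "fst (cart_prod (cycle_graph m) (path_graph (n + 1))) = {..<m} \<times> {..n}"
  unfolding cart_prod_def cycle_graph_def path_graph_def by auto

lemma prism_edges_image:
  "snd (cart_prod (cycle_graph m) (path_graph (n + 1))) = endpoints m ` prism_edges m n"
proof (intro equalityI subsetI)
  fix e assume "e \<in> snd (cart_prod (cycle_graph m) (path_graph (n + 1)))"
  then obtain u1 u2 v1 v2 where e: "e = {(u1, u2), (v1, v2)}" "u1 < m" "u2 \<le> n" "v2 \<le> n"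
    and "(u1 = v1 \<and> {u2, v2} \<in> path_edges (n + 1)) \<or> (u2 = v2 \<and> {u1, v1} \<in> cycle_edges m)"
    unfolding cart_prod_def cycle_graph_def path_graph_def by auto
  then consider j where "u1 = v1" "{u2, v2} = {j, Suc j}" "j < n"
    | i where "u2 = v2" "{u1, v1} = {i, Suc i mod m}" "i < m"
    unfolding path_edges_def cycle_edges_def by auto
  then show "e \<in> endpoints m ` prism_edges m n"
  proof cases
    case (1 j)
    then have "e = endpoints m (Spoke u1 j)" using e by (auto simp: doubleton_eq_iff)
    moreover have "Spoke u1 j \<in> prism_edges m n" using 1(3) e(2) by (simp add: prism_edges_def)
    ultimately show ?thesis by blast
  next
    case (2 i)
    then have "e = endpoints m (Rim i u2)" using e by (auto simp: doubleton_eq_iff)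
    moreover have "Rim i u2 \<in> prism_edges m n" using 2(3) e(3) by (simp add: prism_edges_def)
    ultimately show ?thesis by blast
  qed
next
  fix e assume "e \<in> endpoints m ` prism_edges m n"
  then obtain d where d: "d \<in> prism_edges m n" "e = endpoints m d" by blast
  show "e \<in> snd (cart_prod (cycle_graph m) (path_graph (n + 1)))"
  proof (cases d)
    case (Rim i j)
    then have "i < m" "j \<le> n" using d(1) by (auto simp: prism_edges_def)
    moreover have "{i, Suc i mod m} \<in> cycle_edges m"
      using \<open>i < m\<close> unfolding cycle_edges_def by auto
    ultimately show ?thesis
      unfolding d(2) Rim endpoints.simps
      by (intro cart_prod_edgeI) (auto simp: cycle_graph_def path_graph_def)
  next
    case (Spoke i j)
    then have "i < m" "j < n" using d(1) by (auto simp: prism_edges_def)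
    moreover have "{j, Suc j} \<in> path_edges (n + 1)"
      using \<open>j < n\<close> unfolding path_edges_def by auto
    ultimately show ?thesis
      unfolding d(2) Spoke endpoints.simps
      by (intro cart_prod_edgeI) (auto simp: cycle_graph_def path_graph_def)
  qed
qed

lemma inj_on_endpoints:
  assumes "3 \<le> m"
  shows "inj_on (endpoints m) (prism_edges m n)"
proof (rule inj_onI)
  fix d d' assume d: "d \<in> prism_edges m n" "d' \<in> prism_edges m n"
    and eq: "endpoints m d = endpoints m d'"
  show "d = d'"
  proof (cases d; cases d')
    fix i j i' j' assume dd: "d = Rim i j" "d' = Rim i' j'"
    have "fst ` endpoints m d = fst ` endpoints m d'" "snd ` endpoints m d = snd ` endpoints m d'"
      using eq by simp_all
    then have "{i, Suc i mod m} = {i', Suc i' mod m}" "j = j'"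
      using dd by auto
    moreover have "i < m" "i' < m" using d dd by (auto simp: prism_edges_def)
    ultimately show ?thesis using dd cycle_edge_inject[OF assms] by blast
  qed (use eq in \<open>auto simp: doubleton_eq_iff\<close>)
qed

lemma incident_prism_edges:
  assumes "i < m" "j \<le> n"
  shows "{d \<in> prism_edges m n. (i, j) \<in> endpoints m d} =
    {Rim i j, Rim (cycle_pred m i) j} \<union> (if j < n then {Spoke i j} else {})
      \<union> (if 0 < j then {Spoke i (j - 1)} else {})"
proof (intro set_eqI iffI)
  fix d assume "d \<in> {d \<in> prism_edges m n. (i, j) \<in> endpoints m d}"
  then show "d \<in> {Rim i j, Rim (cycle_pred m i) j} \<union> (if j < n then {Spoke i j} else {})
      \<union> (if 0 < j then {Spoke i (j - 1)} else {})"
    using Suc_mod_eq_iff_cycle_pred[OF assms(1)]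
    by (cases d) (auto simp: prism_edges_def)
next
  fix d assume "d \<in> {Rim i j, Rim (cycle_pred m i) j} \<union> (if j < n then {Spoke i j} else {})
      \<union> (if 0 < j then {Spoke i (j - 1)} else {})"
  then show "d \<in> {d \<in> prism_edges m n. (i, j) \<in> endpoints m d}"
    using assms Suc_mod_eq_iff_cycle_pred[OF assms(1) cycle_pred_less[OF assms(1)]]
    by (auto simp: prism_edges_def cycle_pred_less split: if_splits)
qed

definition cycle_offset :: "nat \<Rightarrow> nat \<Rightarrow> nat" where
  "cycle_offset m i = (if 2 * i + 1 < m then 2 * i + 1 else 2 * (m - 1 - i))"

(* spoke_offset m i is the rank of i when the positions of C[m] are sorted by their rim sum
   cycle_offset m (cycle_pred m i) + cycle_offset m i, and rank_sum m r is the rim sum of the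
   position of rank r; so rim sum plus k times spoke offset increases with the rank. *)
definition spoke_offset :: "nat \<Rightarrow> nat \<Rightarrow> nat" where
  "spoke_offset m i = (if 2 * i < m then 2 * i else 2 * m - 2 * i - 1)"

definition rank_sum :: "nat \<Rightarrow> nat \<Rightarrow> nat" where
  "rank_sum m r = (if r = 0 then 1 else if r = m - 1 then 2 * r - 1 else 2 * r)"

lemma cycle_offset_less: "i < m \<Longrightarrow> cycle_offset m i < m"
  unfolding cycle_offset_def by auto

lemma spoke_offset_less: "i < m \<Longrightarrow> spoke_offset m i < m"
  unfolding spoke_offset_def by auto

lemma inj_on_cycle_offset: "inj_on (cycle_offset m) {..<m}"
  unfolding inj_on_def cycle_offset_def by auto presburger+

lemma inj_on_spoke_offset: "inj_on (spoke_offset m) {..<m}"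
  unfolding inj_on_def spoke_offset_def by auto presburger+

lemma rim_sum_eq_rank_sum:
  assumes "2 \<le> m" "i < m"
  shows "cycle_offset m (cycle_pred m i) + cycle_offset m i = rank_sum m (spoke_offset m i)"
  using assms unfolding cycle_offset_def cycle_pred_def spoke_offset_def rank_sum_def
  by auto

lemma rank_sum_strict_mono:
  assumes "3 \<le> m" "r < r'" "r' < m"
  shows "rank_sum m r < rank_sum m r'"
  using assms unfolding rank_sum_def by auto

lemma inj_on_rim_sum_spoke_offset:
  assumes "3 \<le> m"
  shows "inj_on (\<lambda>i. cycle_offset m (cycle_pred m i) + cycle_offset m i + k * spoke_offset m i)
    {..<m}"
proof -
  have "strict_mono_on {..<m} (\<lambda>r. rank_sum m r + k * r)"
    using rank_sum_strict_mono[OF assms] by (auto simp: strict_mono_on_def intro: add_less_le_mono)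
  then have "inj_on (\<lambda>r. rank_sum m r + k * r) (spoke_offset m ` {..<m})"
    by (rule inj_on_subset[OF strict_mono_on_imp_inj_on]) (auto simp: spoke_offset_less)
  then have "inj_on ((\<lambda>r. rank_sum m r + k * r) \<circ> spoke_offset m) {..<m}"
    using inj_on_spoke_offset by (rule comp_inj_on[rotated])
  then show ?thesis
    by (rule inj_on_cong[THEN iffD1, rotated]) (use assms in \<open>simp add: rim_sum_eq_rank_sum\<close>)
qed

definition rim_block :: "nat \<Rightarrow> nat \<Rightarrow> nat" where
  "rim_block n j = (if j < n then j else 2 * n)"

fun label_block :: "nat \<Rightarrow> prism_edge \<Rightarrow> nat" where
  "label_block n (Rim i j) = rim_block n j"
| "label_block n (Spoke i j) = n + j"

fun label_offset :: "nat \<Rightarrow> prism_edge \<Rightarrow> nat" where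
  "label_offset m (Rim i j) = cycle_offset m i"
| "label_offset m (Spoke i j) = spoke_offset m i"

definition label :: "nat \<Rightarrow> nat \<Rightarrow> prism_edge \<Rightarrow> nat" where
  "label m n d = m * label_block n d + label_offset m d + 1"

lemma bij_betw_label: "bij_betw (label m n) (prism_edges m n) {1..m * (2 * n + 1)}"
  unfolding label_def
proof (rule bij_betw_radix_label[OF finite_prism_edges card_prism_edges])
  fix d assume "d \<in> prism_edges m n"
  then show "label_block n d < 2 * n + 1 \<and> label_offset m d < m"
    by (auto simp: prism_edges_def rim_block_def cycle_offset_less spoke_offset_less)
next
  show "inj_on (\<lambda>d. (label_block n d, label_offset m d)) (prism_edges m n)"
  proof (rule inj_onI)
    fix d d' assume "d \<in> prism_edges m n" "d' \<in> prism_edges m n"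
      and "(label_block n d, label_offset m d) = (label_block n d', label_offset m d')"
    then show "d = d'"
      using inj_on_cycle_offset[of m] inj_on_spoke_offset[of m]
      by (auto simp: prism_edges_def rim_block_def inj_on_def split: if_splits)
  qed
qed

definition spoke_count :: "nat \<Rightarrow> nat \<Rightarrow> nat" where
  "spoke_count n j = (if j < n then 1 else 0) + (if 0 < j then 1 else 0)"

(* Sum of the blocks of the labels at a vertex of layer j. *)
definition layer_base :: "nat \<Rightarrow> nat \<Rightarrow> nat" where
  "layer_base n j =
    2 * rim_block n j + (if j < n then n + j else 0) + (if 0 < j then n + j - 1 else 0)"

definition prism_vertex_sum :: "nat \<Rightarrow> nat \<Rightarrow> nat \<Rightarrow> nat \<Rightarrow> nat" where
  "prism_vertex_sum m n i j = m * layer_base n j + 2 + spoke_count n j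
     + cycle_offset m (cycle_pred m i) + cycle_offset m i + spoke_count n j * spoke_offset m i"

lemma label_sum_incident:
  assumes "2 \<le> m" "i < m" "j \<le> n"
  shows "(\<Sum>d\<in>{d \<in> prism_edges m n. (i, j) \<in> endpoints m d}. label m n d)
    = prism_vertex_sum m n i j"
  using cycle_pred_neq_self[OF assms(1), of i] assms(3)
  unfolding incident_prism_edges[OF assms(2,3)]
  by (cases "j < n"; cases j)
     (auto simp: label_def prism_vertex_sum_def spoke_count_def layer_base_def algebra_simps)

lemma layer_base_gap:
  assumes "j < j'" "j' \<le> n"
  shows "layer_base n j + spoke_count n j + 2 \<le> layer_base n j'"
  using assms unfolding layer_base_def spoke_count_def rim_block_def by auto

lemma prism_vertex_sum_bounds:
  assumes "i < m"
  shows "m * layer_base n j < prism_vertex_sum m n i j"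
    and "prism_vertex_sum m n i j \<le> m * (layer_base n j + spoke_count n j + 2)"
proof -
  show "m * layer_base n j < prism_vertex_sum m n i j" by (simp add: prism_vertex_sum_def)
  have "cycle_offset m (cycle_pred m i) + cycle_offset m i \<le> 2 * (m - 1)"
    using cycle_offset_less[OF cycle_pred_less[OF assms]] cycle_offset_less[OF assms] by simp
  moreover have "spoke_count n j * spoke_offset m i \<le> spoke_count n j * (m - 1)"
    using spoke_offset_less[OF assms] by (intro mult_le_mono2) simp
  ultimately have "prism_vertex_sum m n i j
      \<le> m * layer_base n j + (2 + spoke_count n j) + 2 * (m - 1) + spoke_count n j * (m - 1)"
    unfolding prism_vertex_sum_def by linarith
  also have "\<dots> = m * (layer_base n j + spoke_count n j + 2)"
    using assms by (cases m) (simp_all add: algebra_simps)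
  finally show "prism_vertex_sum m n i j \<le> m * (layer_base n j + spoke_count n j + 2)" .
qed

lemma prism_vertex_sum_less_layer:
  assumes "i < m" "i' < m" "j < j'" "j' \<le> n"
  shows "prism_vertex_sum m n i j < prism_vertex_sum m n i' j'"
proof -
  have "prism_vertex_sum m n i j \<le> m * (layer_base n j + spoke_count n j + 2)"
    using prism_vertex_sum_bounds(2)[OF assms(1)] .
  also have "\<dots> \<le> m * layer_base n j'"
    using layer_base_gap[OF assms(3,4)] by (rule mult_le_mono2)
  also have "\<dots> < prism_vertex_sum m n i' j'"
    using prism_vertex_sum_bounds(1)[OF assms(2)] .
  finally show ?thesis .
qed

lemma inj_on_prism_vertex_sum:
  assumes "3 \<le> m"
  shows "inj_on (\<lambda>(i, j). prism_vertex_sum m n i j) ({..<m} \<times> {..n})"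
proof (rule inj_onI, clarify)
  fix i j i' j' assume ij: "i < m" "j \<le> n" "i' < m" "j' \<le> n"
    and eq: "prism_vertex_sum m n i j = prism_vertex_sum m n i' j'"
  have "j = j'"
    using prism_vertex_sum_less_layer[OF ij(1,3) _ ij(4)]
      prism_vertex_sum_less_layer[OF ij(3,1) _ ij(2)] eq
    by (metis less_irrefl linorder_neqE_nat)
  with eq have "cycle_offset m (cycle_pred m i) + cycle_offset m i + spoke_count n j * spoke_offset m i
      = cycle_offset m (cycle_pred m i') + cycle_offset m i' + spoke_count n j * spoke_offset m i'"
    unfolding prism_vertex_sum_def by simp
  then have "i = i'"
    using inj_on_rim_sum_spoke_offset[OF assms, of "spoke_count n j"] ij(1,3) by (auto dest: inj_onD)
  with \<open>j = j'\<close> show "i = i' \<and> j = j'" by simp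
qed

theorem theorem1p2:
  fixes m n :: nat
  assumes "m \<ge> 3" and "n \<ge> 1"
  shows "antimagic (cart_prod (cycle_graph m) (path_graph (n + 1)))"
proof -
  let ?G = "cart_prod (cycle_graph m) (path_graph (n + 1))"
  have "bij_betw (endpoints m) (prism_edges m n) (snd ?G)"
    using inj_on_endpoints[OF assms(1)] prism_edges_image by (simp add: bij_betw_def)
  moreover have "bij_betw (label m n) (prism_edges m n) {1..card (prism_edges m n)}"
    using bij_betw_label by (simp add: card_prism_edges)
  moreover have "inj_on (\<lambda>v. \<Sum>d\<in>{d \<in> prism_edges m n. v \<in> endpoints m d}. label m n d) (fst ?G)"
  proof -
    have "inj_on (\<lambda>v. \<Sum>d\<in>{d \<in> prism_edges m n. v \<in> endpoints m d}. label m n d) ({..<m} \<times> {..n})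
      \<longleftrightarrow> inj_on (\<lambda>(i, j). prism_vertex_sum m n i j) ({..<m} \<times> {..n})"
      using assms(1) by (intro inj_on_cong) (auto simp: label_sum_incident)
    then show ?thesis
      using inj_on_prism_vertex_sum[OF assms(1)] unfolding prism_vertices by simp
  qed
  ultimately show ?thesis
    unfolding antimagic_def by (blast intro: antimagic_labeling_reindex)
qed

end
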